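(* Let $L^n_{\mathbb{C}}$ be the set of all $A\in M_n(\mathbb{C})$ such that the Schur map $S_A(B)=A\circ B$ on $M_n(\mathbb{C})$ is nonzero and multiplicative, regarded as a group under the Schur product, and let $(L^n_{\mathbb{C}})^{+}$ be the subgroup of those $A\in L^n_{\mathbb{C}}$ that are positive matrices. Then $L^n_{\mathbb{C}}$ is a complex Lie group of complex dimension $n-1$, and $(L^n_{\mathbb{C}})^{+}$ is a compact Lie group isomorphic (as a topological group) to the $(n-1)$-torus $\mathbb{T}^{n-1}$.
   Context: $A\circ B=(a_{ij}b_{ij})$ is the entrywise product; multiplicative means $S_A(BC)=S_A(B)S_A(C)$. A positive matrix is a Hermitian matrix with nonnegative spectrum. $\mathbb{T}$ is the circle group of complex numbers of modulus one. The topology is the one inherited from $M_n(\mathbb{C})$. *)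

theory Defs
  imports "HOL-Analysis.Analysis" "HOL-Algebra.Group"
begin

definition schur :: "complex^'n^'n \<Rightarrow> complex^'n^'n \<Rightarrow> complex^'n^'n" where
  "schur A B = (\<chi> i j. A $ i $ j * B $ i $ j)"

definition schur_multiplicative :: "complex^'n^'n \<Rightarrow> bool" where
  "schur_multiplicative A \<longleftrightarrow> (\<forall>B C. schur A (B ** C) = schur A B ** schur A C)"

definition Lset :: "(complex^'n^'n) set" where
  "Lset = {A. (\<exists>B. schur A B \<noteq> 0) \<and> schur_multiplicative A}"

definition positive_matrix :: "complex^'n^'n \<Rightarrow> bool" where
  "positive_matrix A \<longleftrightarrow> (\<forall>i j. A $ j $ i = cnj (A $ i $ j)) \<and>
     (\<forall>c v. v \<noteq> 0 \<and> A *v v = c *s v \<longrightarrow> c \<in> \<real> \<and> 0 \<le> Re c)"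

definition Lpos :: "(complex^'n^'n) set" where
  "Lpos = {A \<in> Lset. positive_matrix A}"

definition schur_one :: "complex^'n^'n" where
  "schur_one = (\<chi> i j. 1)"

definition schur_group :: "(complex^'n^'n) monoid" where
  "schur_group = \<lparr>carrier = Lset, mult = schur, one = schur_one\<rparr>"

text \<open>(C^*)^m and T^m, as functions nat => complex supported on {..<m}
  (with the product topology, this is the usual topology of C^m).\<close>
definition Cstar_pow :: "nat \<Rightarrow> (nat \<Rightarrow> complex) set" where
  "Cstar_pow m = {x. (\<forall>i<m. x i \<noteq> 0) \<and> (\<forall>i\<ge>m. x i = 0)}"

definition torus_pow :: "nat \<Rightarrow> (nat \<Rightarrow> complex) set" where
  "torus_pow m = {x. (\<forall>i<m. norm (x i) = 1) \<and> (\<forall>i\<ge>m. x i = 0)}"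

definition pmult :: "(nat \<Rightarrow> complex) \<Rightarrow> (nat \<Rightarrow> complex) \<Rightarrow> nat \<Rightarrow> complex" where
  "pmult x y = (\<lambda>i. x i * y i)"

end

theory Submission
  imports Defs
begin

text \<open>
  Testing multiplicativity of \<open>S\<^sub>A\<close> on matrix units shows that \<open>A\<close> is a nonzero multiplicative
  cocycle, \<open>a\<^sub>i\<^sub>j = a\<^sub>i\<^sub>k a\<^sub>k\<^sub>j\<close>, and conversely every cocycle gives a multiplicative Schur map.
  A cocycle is a coboundary \<open>a\<^sub>i\<^sub>j = y\<^sub>i / y\<^sub>j\<close> of a vector with nonzero entries, unique up to a
  scalar; normalising the last entry to \<open>1\<close> identifies \<open>L\<^sup>n\<close> with \<open>(\<complex>\<^sup>*)\<^sup>n\<^sup>-\<^sup>1\<close>, Schur product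
  becoming the coordinatewise product. Such a matrix is Hermitian exactly when all \<open>|y\<^sub>i| = 1\<close>,
  and then it is automatically positive: it has rank one, so its eigenvalues are \<open>0\<close> and \<open>n\<close>.
  Hence \<open>(L\<^sup>n)\<^sup>+\<close> corresponds to \<open>\<bbbT>\<^sup>n\<^sup>-\<^sup>1\<close>.
\<close>

definition multiplicative_cocycle :: "complex^'n^'n \<Rightarrow> bool" where
  "multiplicative_cocycle A \<longleftrightarrow> (\<forall>i j k. A$i$j = A$i$k * A$k$j) \<and> (\<forall>i. A$i$i = 1)"

lemma schur_nth [simp]: "schur A B $ i $ j = A$i$j * B$i$j"
  by (simp add: schur_def)

lemma schur_multiplicative_factor:
  fixes A :: "complex^'n::finite^'n"
  assumes "schur_multiplicative A"
  shows "A$i$j = A$i$k * A$k$j"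
proof -
  define E1 :: "complex^'n^'n" where "E1 = (\<chi> p q. if p = i \<and> q = k then 1 else 0)"
  define E2 :: "complex^'n^'n" where "E2 = (\<chi> p q. if p = k \<and> q = j then 1 else 0)"
  have "schur A (E1 ** E2) $ i $ j = (schur A E1 ** schur A E2) $ i $ j"
    using assms by (simp add: schur_multiplicative_def)
  then show ?thesis
    by (simp add: matrix_matrix_mult_def E1_def E2_def if_distrib cong: if_cong)
qed

lemma factorizing_matrix_diag_eq_1:
  fixes A :: "complex^'n::finite^'n"
  assumes factor: "\<And>i j k. A$i$j = A$i$k * A$k$j" and "A \<noteq> 0"
  shows "A$i$i = 1"
proof -
  obtain p q where "A$p$q \<noteq> 0"
    using \<open>A \<noteq> 0\<close> by (metis vec_eq_iff zero_index)
  then have "A$p$p = 1"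
    using factor[of p q p] by (metis mult_cancel_right2)
  then have "A$p$i * A$i$p = 1"
    using factor[of p p i] by simp
  then have "A$p$i \<noteq> 0" by auto
  then show ?thesis
    using factor[of p i i] by (metis mult_cancel_left1)
qed

lemma multiplicative_cocycle_imp_schur_multiplicative:
  fixes A :: "complex^'n::finite^'n"
  assumes "multiplicative_cocycle A"
  shows "schur_multiplicative A"
  unfolding schur_multiplicative_def
proof (intro allI)
  fix B C :: "complex^'n^'n"
  have factor: "A$i$j = A$i$k * A$k$j" for i j k
    using assms by (simp add: multiplicative_cocycle_def)
  show "schur A (B ** C) = schur A B ** schur A C"
    unfolding vec_eq_iff
    by (auto simp: matrix_matrix_mult_def sum_distrib_left intro!: sum.cong)
      (metis factor)
qed

lemma mem_Lset_iff: "(A :: complex^'n::finite^'n) \<in> Lset \<longleftrightarrow> multiplicative_cocycle A"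
proof
  assume "A \<in> Lset"
  then obtain B where "schur A B \<noteq> 0" and mult: "schur_multiplicative A"
    by (auto simp: Lset_def)
  then have "A \<noteq> 0" by (auto simp: vec_eq_iff)
  with schur_multiplicative_factor[OF mult] show "multiplicative_cocycle A"
    by (auto simp: multiplicative_cocycle_def intro: factorizing_matrix_diag_eq_1)
next
  assume cocycle: "multiplicative_cocycle A"
  then have "schur A schur_one $ i $ i \<noteq> 0" for i
    by (simp add: schur_one_def multiplicative_cocycle_def)
  then have "schur A schur_one \<noteq> 0" by (metis zero_index)
  with multiplicative_cocycle_imp_schur_multiplicative[OF cocycle] show "A \<in> Lset"
    by (auto simp: Lset_def)
qed

lemma multiplicative_cocycle_mult_swap:
  "multiplicative_cocycle A \<Longrightarrow> A$i$j * A$j$i = 1"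
  unfolding multiplicative_cocycle_def by metis

lemma multiplicative_cocycle_nonzero:
  "multiplicative_cocycle A \<Longrightarrow> A$i$j \<noteq> 0"
  by (metis multiplicative_cocycle_mult_swap mult_zero_left zero_neq_one)

lemma multiplicative_cocycle_eigenvalue:
  fixes A :: "complex^'n::finite^'n"
  assumes cocycle: "multiplicative_cocycle A" and "v \<noteq> 0" and eigen: "A *v v = c *s v"
  shows "c = 0 \<or> c = of_nat CARD('n)"
proof -
  fix p :: 'n
  define s where "s = (\<Sum>k\<in>UNIV. A$p$k * v$k)"
  \<comment> \<open>\<open>A\<close> has rank one: every column is a multiple of column \<open>p\<close>.\<close>
  have "(A *v v)$i = A$i$p * s" for i
    unfolding matrix_vector_mult_def s_def sum_distrib_left vec_lambda_beta
    using cocycle by (intro sum.cong) (auto simp: multiplicative_cocycle_def mult.assoc)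
  then have cv: "c * v$i = A$i$p * s" for i
    using eigen by (simp add: vec_eq_iff)
  have "c * s = (\<Sum>j\<in>UNIV. A$p$j * (c * v$j))"
    by (simp add: s_def sum_distrib_left mult.left_commute)
  also have "\<dots> = (\<Sum>j\<in>(UNIV::'n set). s)"
    by (simp add: cv mult.assoc[symmetric] multiplicative_cocycle_mult_swap[OF cocycle])
  finally have "c * s = of_nat CARD('n) * s" by simp
  moreover have "s = 0 \<Longrightarrow> c = 0"
    using cv \<open>v \<noteq> 0\<close> by (metis mult_eq_0_iff vec_eq_iff zero_index)
  ultimately show ?thesis by auto
qed

lemma cnj_eq_inverse_iff_norm_eq_1:
  assumes "a \<noteq> 0"
  shows "cnj a = inverse a \<longleftrightarrow> norm (a::complex) = 1"
proof -
  have "cnj a = inverse a \<longleftrightarrow> a * cnj a = 1"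
    using assms by (metis inverse_unique right_inverse)
  also have "\<dots> \<longleftrightarrow> (norm a)\<^sup>2 = 1"
    by (metis complex_norm_square of_real_eq_1_iff)
  also have "\<dots> \<longleftrightarrow> norm a = 1"
    by (simp add: abs_square_eq_1)
  finally show ?thesis .
qed

lemma multiplicative_cocycle_hermitian_iff:
  assumes "multiplicative_cocycle A"
  shows "(\<forall>i j. A$j$i = cnj (A$i$j)) \<longleftrightarrow> (\<forall>i j. norm (A$i$j) = 1)"
proof -
  have "A$j$i = inverse (A$i$j)" for i j
    using multiplicative_cocycle_mult_swap[OF assms, of i j] by (simp add: inverse_unique)
  then show ?thesis
    using cnj_eq_inverse_iff_norm_eq_1 multiplicative_cocycle_nonzero[OF assms] by metis
qed

lemma mem_Lpos_iff:
  "(A :: complex^'n::finite^'n) \<in> Lpos \<longleftrightarrow> multiplicative_cocycle A \<and> (\<forall>i j. norm (A$i$j) = 1)"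
proof (cases "multiplicative_cocycle A")
  case True
  have "c \<in> \<real> \<and> 0 \<le> Re c" if "v \<noteq> 0 \<and> A *v v = c *s v" for c v
    using multiplicative_cocycle_eigenvalue[OF True, of v c] that by auto
  then have "positive_matrix A \<longleftrightarrow> (\<forall>i j. A$j$i = cnj (A$i$j))"
    by (auto simp: positive_matrix_def)
  with True show ?thesis
    by (simp add: Lpos_def mem_Lset_iff multiplicative_cocycle_hermitian_iff)
qed (simp add: Lpos_def mem_Lset_iff)

lemma multiplicative_cocycle_schur:
  "multiplicative_cocycle A \<Longrightarrow> multiplicative_cocycle B \<Longrightarrow> multiplicative_cocycle (schur A B)"
  unfolding multiplicative_cocycle_def by (simp add: mult_ac)

lemma multiplicative_cocycle_schur_one: "multiplicative_cocycle schur_one"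
  by (simp add: multiplicative_cocycle_def schur_one_def)

lemma multiplicative_cocycle_transpose:
  "multiplicative_cocycle A \<Longrightarrow> multiplicative_cocycle (transpose A)"
  unfolding multiplicative_cocycle_def transpose_def by (simp add: mult.commute)

lemma schur_transpose_cocycle:
  "multiplicative_cocycle A \<Longrightarrow> schur (transpose A) A = schur_one"
  by (simp add: vec_eq_iff schur_one_def transpose_def mult.commute multiplicative_cocycle_mult_swap)

lemma schur_assoc: "schur (schur A B) C = schur A (schur B C)"
  by (simp add: vec_eq_iff mult.assoc)

lemma schur_one_left: "schur schur_one A = A"
  by (simp add: vec_eq_iff schur_one_def)

lemma group_schur_group: "group (schur_group :: (complex^'n::finite^'n) monoid)"
proof (rule groupI)
  fix A :: "complex^'n^'n"
  assume "A \<in> carrier schur_group"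
  then have "multiplicative_cocycle A" by (simp add: schur_group_def mem_Lset_iff)
  then show "\<exists>B\<in>carrier schur_group. B \<otimes>\<^bsub>schur_group\<^esub> A = \<one>\<^bsub>schur_group\<^esub>"
    by (intro bexI[of _ "transpose A"])
      (simp_all add: schur_group_def mem_Lset_iff schur_transpose_cocycle
        multiplicative_cocycle_transpose)
qed (simp_all add: schur_group_def mem_Lset_iff multiplicative_cocycle_schur
  multiplicative_cocycle_schur_one schur_assoc schur_one_left)

lemma schur_group_inv:
  assumes "(A :: complex^'n::finite^'n) \<in> Lset"
  shows "inv\<^bsub>schur_group\<^esub> A = transpose A"
  using assms
  by (intro group.inv_equality[OF group_schur_group])
    (simp_all add: schur_group_def mem_Lset_iff schur_transpose_cocycle
      multiplicative_cocycle_transpose)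

lemma subgroup_Lpos: "subgroup (Lpos :: (complex^'n::finite^'n) set) schur_group"
proof (rule group.subgroupI[OF group_schur_group])
  show "Lpos \<subseteq> carrier (schur_group :: (complex^'n^'n) monoid)"
    by (auto simp: schur_group_def Lpos_def)
  have "schur_one \<in> (Lpos :: (complex^'n^'n) set)"
    using multiplicative_cocycle_schur_one by (simp add: mem_Lpos_iff schur_one_def)
  then show "(Lpos :: (complex^'n^'n) set) \<noteq> {}" by blast
next
  fix A :: "complex^'n^'n"
  assume A: "A \<in> Lpos"
  then have "A \<in> Lset" by (simp add: Lpos_def)
  moreover from A have "multiplicative_cocycle A" and "\<forall>i j. norm (A$i$j) = 1"
    by (simp_all add: mem_Lpos_iff)
  ultimately show "inv\<^bsub>schur_group\<^esub> A \<in> Lpos"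
    by (simp add: schur_group_inv mem_Lpos_iff multiplicative_cocycle_transpose)
      (simp add: transpose_def)
next
  fix A B :: "complex^'n^'n"
  assume "A \<in> Lpos" "B \<in> Lpos"
  then show "A \<otimes>\<^bsub>schur_group\<^esub> B \<in> Lpos"
    by (auto simp: mem_Lpos_iff schur_group_def multiplicative_cocycle_schur norm_mult)
qed

lemma norm_le_sum_norm_cart: "norm (x :: 'a::real_normed_vector^'n::finite) \<le> (\<Sum>i\<in>UNIV. norm (x$i))"
  by (simp add: norm_vec_def L2_set_le_sum)

lemma closed_Lpos: "closed (Lpos :: (complex^'n::finite^'n) set)"
proof -
  have "(Lpos :: (complex^'n^'n) set) = {A. (\<forall>i j k. A$i$j = A$i$k * A$k$j) \<and> (\<forall>i. A$i$i = 1)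
      \<and> (\<forall>i j. norm (A$i$j) = 1)}"
    by (auto simp: mem_Lpos_iff multiplicative_cocycle_def)
  also have "closed \<dots>"
    by (intro closed_Collect_conj closed_Collect_all closed_Collect_eq continuous_intros)
  finally show ?thesis .
qed

lemma bounded_Lpos: "bounded (Lpos :: (complex^'n::finite^'n) set)"
proof -
  have "norm A \<le> of_nat (CARD('n) * CARD('n))" if "A \<in> (Lpos :: (complex^'n^'n) set)" for A
  proof -
    have "norm A \<le> (\<Sum>i\<in>UNIV. \<Sum>j\<in>UNIV. norm (A$i$j))"
      by (intro order.trans[OF norm_le_sum_norm_cart] sum_mono norm_le_sum_norm_cart)
    also have "\<dots> = of_nat (CARD('n) * CARD('n))"
      using that by (simp add: mem_Lpos_iff)
    finally show ?thesis .
  qed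
  then show ?thesis
    unfolding bounded_iff by blast
qed

lemma compact_Lpos: "compact (Lpos :: (complex^'n::finite^'n) set)"
  by (simp add: compact_eq_bounded_closed closed_Lpos bounded_Lpos)

definition coboundary :: "('n \<Rightarrow> complex) \<Rightarrow> complex^'n^'n" where
  "coboundary y = (\<chi> i j. y i / y j)"

lemma multiplicative_cocycle_coboundary:
  "(\<And>i. y i \<noteq> 0) \<Longrightarrow> multiplicative_cocycle (coboundary y)"
  by (simp add: multiplicative_cocycle_def coboundary_def)

lemma schur_coboundary: "schur (coboundary y) (coboundary z) = coboundary (\<lambda>i. y i * z i)"
  by (simp add: vec_eq_iff coboundary_def)

lemma coboundary_column:
  assumes "multiplicative_cocycle A"
  shows "coboundary (\<lambda>i. A$i$p) = A"
proof -
  have "A$i$p / A$j$p = A$i$j" for i j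
    using assms multiplicative_cocycle_nonzero[OF assms, of j p]
    by (simp add: multiplicative_cocycle_def field_simps)
  then show ?thesis by (simp add: vec_eq_iff coboundary_def)
qed

text \<open>
  Coordinates are taken relative to an enumeration \<open>f\<close> of the index type by \<open>{..<n}\<close>;
  the last index \<open>f (n - 1)\<close> carries the normalised entry \<open>1\<close>.
\<close>

definition extend_coords :: "(nat \<Rightarrow> 'n::finite) \<Rightarrow> (nat \<Rightarrow> complex) \<Rightarrow> 'n \<Rightarrow> complex" where
  "extend_coords f x i =
    (let k = inv_into {..<CARD('n)} f i in if k < CARD('n) - 1 then x k else 1)"

definition matrix_of_coords :: "(nat \<Rightarrow> 'n::finite) \<Rightarrow> (nat \<Rightarrow> complex) \<Rightarrow> complex^'n^'n" where
  "matrix_of_coords f x = coboundary (extend_coords f x)"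

definition coords_of_matrix :: "(nat \<Rightarrow> 'n::finite) \<Rightarrow> complex^'n^'n \<Rightarrow> nat \<Rightarrow> complex" where
  "coords_of_matrix f A k = (if k < CARD('n) - 1 then A $ f k $ f (CARD('n) - 1) else 0)"

lemma extend_coords_nonzero: "x \<in> Cstar_pow (CARD('n) - 1) \<Longrightarrow> extend_coords f x i \<noteq> 0"
  for f :: "nat \<Rightarrow> 'n::finite"
  by (simp add: extend_coords_def Cstar_pow_def Let_def)

lemma norm_extend_coords: "x \<in> torus_pow (CARD('n) - 1) \<Longrightarrow> norm (extend_coords f x i) = 1"
  for f :: "nat \<Rightarrow> 'n::finite"
  by (simp add: extend_coords_def torus_pow_def Let_def)

lemma extend_coords_pmult:
  "extend_coords f (pmult x y) = (\<lambda>i. extend_coords f x i * extend_coords f y i)"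
  by (simp add: fun_eq_iff extend_coords_def pmult_def Let_def)

lemma extend_coords_enum:
  fixes f :: "nat \<Rightarrow> 'n::finite"
  assumes "bij_betw f {..<CARD('n)} UNIV"
  shows "k < CARD('n) - 1 \<Longrightarrow> extend_coords f x (f k) = x k"
    and "extend_coords f x (f (CARD('n) - 1)) = 1"
  using assms by (simp_all add: extend_coords_def bij_betw_inv_into_left)

lemma extend_coords_coords_of_matrix:
  fixes f :: "nat \<Rightarrow> 'n::finite"
  assumes f: "bij_betw f {..<CARD('n)} UNIV" and cocycle: "multiplicative_cocycle A"
  shows "extend_coords f (coords_of_matrix f A) = (\<lambda>i. A $ i $ f (CARD('n) - 1))"
proof
  fix i
  define k where "k = inv_into {..<CARD('n)} f i"
  have "k < CARD('n)" and "f k = i"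
    unfolding k_def using bij_betw_inv_into[OF f] bij_betw_inv_into_right[OF f]
    by (auto dest: bij_betwE)
  have "extend_coords f (coords_of_matrix f A) i
      = (if k < CARD('n) - 1 then A $ f k $ f (CARD('n) - 1) else 1)"
    by (simp add: extend_coords_def coords_of_matrix_def k_def)
  also have "\<dots> = A $ i $ f (CARD('n) - 1)"
  proof (cases "k < CARD('n) - 1")
    case False
    with \<open>k < CARD('n)\<close> have "k = CARD('n) - 1" by linarith
    with False \<open>f k = i\<close> cocycle show ?thesis
      by (simp add: multiplicative_cocycle_def)
  qed (simp add: \<open>f k = i\<close>)
  finally show "extend_coords f (coords_of_matrix f A) i = A $ i $ f (CARD('n) - 1)" .
qed

lemma continuous_on_extend_coords: "continuous_on S (\<lambda>x. extend_coords f x i)"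
  for f :: "nat \<Rightarrow> 'n::finite"
proof (cases "inv_into {..<CARD('n)} f i < CARD('n) - 1")
  case True
  then show ?thesis
    by (simp add: extend_coords_def continuous_on_subset[OF continuous_on_product_coordinates])
qed (simp add: extend_coords_def)

lemma Cstar_pow_update:
  "x \<in> Cstar_pow m \<Longrightarrow> k < m \<Longrightarrow> z \<noteq> 0 \<Longrightarrow> x(k := z) \<in> Cstar_pow m"
  by (simp add: Cstar_pow_def)

lemma holomorphic_on_extend_coords_update:
  fixes f :: "nat \<Rightarrow> 'n::finite"
  shows "(\<lambda>z. extend_coords f (x(k := z)) i) holomorphic_on S"
proof -
  define m where "m = inv_into {..<CARD('n)} f i"
  have "(\<lambda>z. extend_coords f (x(k := z)) i)
      = (if m = k \<and> k < CARD('n) - 1 then (\<lambda>z. z) else (\<lambda>z. extend_coords f x i))"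
    by (auto simp: fun_eq_iff extend_coords_def Let_def simp flip: m_def)
  then show ?thesis by simp
qed

lemma holomorphic_on_matrix_of_coords_update:
  fixes f :: "nat \<Rightarrow> 'n::finite"
  assumes "x \<in> Cstar_pow (CARD('n) - 1)" and "k < CARD('n) - 1"
  shows "(\<lambda>z. matrix_of_coords f (x(k := z)) $ i $ j) holomorphic_on {z. z \<noteq> 0}"
proof -
  have "extend_coords f (x(k := z)) j \<noteq> 0" if "z \<noteq> 0" for z
    using extend_coords_nonzero[OF Cstar_pow_update[OF assms that]] .
  then show ?thesis
    unfolding matrix_of_coords_def coboundary_def vec_lambda_beta
    by (intro holomorphic_on_divide holomorphic_on_extend_coords_update) auto
qed

lemma matrix_of_coords_pmult:
  "matrix_of_coords f (pmult x y) = schur (matrix_of_coords f x) (matrix_of_coords f y)"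
  by (simp add: matrix_of_coords_def schur_coboundary extend_coords_pmult)

lemma homeomorphism_Cstar_pow_Lset:
  fixes f :: "nat \<Rightarrow> 'n::finite"
  assumes f: "bij_betw f {..<CARD('n)} UNIV"
  shows "homeomorphism (Cstar_pow (CARD('n) - 1)) Lset (matrix_of_coords f) (coords_of_matrix f)"
proof (rule homeomorphismI)
  show "continuous_on (Cstar_pow (CARD('n) - 1)) (matrix_of_coords f)"
    unfolding matrix_of_coords_def coboundary_def
    by (intro continuous_on_vec_lambda continuous_on_divide continuous_on_extend_coords)
      (simp add: extend_coords_nonzero)
  show "continuous_on Lset (coords_of_matrix f)"
    unfolding coords_of_matrix_def
  proof (intro continuous_on_coordinatewise_then_product)
    show "continuous_on Lset (\<lambda>A. if k < CARD('n) - 1 then A $ f k $ f (CARD('n) - 1) else 0)"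
      for k
      by (cases "k < CARD('n) - 1") (auto intro!: continuous_intros)
  qed
  show "matrix_of_coords f ` Cstar_pow (CARD('n) - 1) \<subseteq> Lset"
    by (auto simp: mem_Lset_iff matrix_of_coords_def extend_coords_nonzero
        intro!: multiplicative_cocycle_coboundary)
  show "coords_of_matrix f ` Lset \<subseteq> Cstar_pow (CARD('n) - 1)"
    by (auto simp: mem_Lset_iff coords_of_matrix_def Cstar_pow_def multiplicative_cocycle_nonzero)
  show "coords_of_matrix f (matrix_of_coords f x) = x" if "x \<in> Cstar_pow (CARD('n) - 1)" for x
    using that extend_coords_enum[OF f]
    by (auto simp: coords_of_matrix_def matrix_of_coords_def coboundary_def Cstar_pow_def)
  show "matrix_of_coords f (coords_of_matrix f A) = A" if "A \<in> Lset" for A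
    using that
    by (simp add: matrix_of_coords_def mem_Lset_iff extend_coords_coords_of_matrix[OF f]
        coboundary_column)
qed

lemma torus_pow_subset_Cstar_pow: "torus_pow m \<subseteq> Cstar_pow m"
  by (auto simp: torus_pow_def Cstar_pow_def)

lemma matrix_of_coords_torus_pow:
  fixes f :: "nat \<Rightarrow> 'n::finite"
  assumes x: "x \<in> torus_pow (CARD('n) - 1)"
  shows "matrix_of_coords f x \<in> Lpos"
proof -
  from x torus_pow_subset_Cstar_pow have "x \<in> Cstar_pow (CARD('n) - 1)" ..
  then show ?thesis
    by (simp add: mem_Lpos_iff matrix_of_coords_def multiplicative_cocycle_coboundary
        extend_coords_nonzero)
      (simp add: coboundary_def norm_divide norm_extend_coords[OF x])
qed

lemma homeomorphism_torus_pow_Lpos: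
  fixes f :: "nat \<Rightarrow> 'n::finite"
  assumes f: "bij_betw f {..<CARD('n)} UNIV"
  shows "homeomorphism (torus_pow (CARD('n) - 1)) Lpos (matrix_of_coords f) (coords_of_matrix f)"
proof (rule homeomorphism_of_subsets[OF homeomorphism_Cstar_pow_Lset[OF f]])
  show "torus_pow (CARD('n) - 1) \<subseteq> Cstar_pow (CARD('n) - 1)"
    by (rule torus_pow_subset_Cstar_pow)
  show "Lpos \<subseteq> Lset" by (auto simp: Lpos_def)
  have "coords_of_matrix f A \<in> torus_pow (CARD('n) - 1)" if "A \<in> Lpos" for A
    using that by (simp add: coords_of_matrix_def torus_pow_def mem_Lpos_iff)
  moreover have "matrix_of_coords f (coords_of_matrix f A) = A" if "A \<in> Lpos" for A
    using that homeomorphism_apply2[OF homeomorphism_Cstar_pow_Lset[OF f]] by (auto simp: Lpos_def)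
  ultimately have "Lpos \<subseteq> matrix_of_coords f ` torus_pow (CARD('n) - 1)"
    by (metis image_eqI subsetI)
  then show "matrix_of_coords f ` torus_pow (CARD('n) - 1) = Lpos"
    using matrix_of_coords_torus_pow by blast
qed

theorem proposition3p3:
  shows "group (schur_group :: (complex^'n::finite^'n) monoid)
    \<and> subgroup (Lpos :: (complex^'n^'n) set) schur_group
    \<and> (\<exists>\<phi> \<psi>. homeomorphism (Cstar_pow (CARD('n) - 1)) (Lset :: (complex^'n^'n) set) \<phi> \<psi>
          \<and> (\<forall>x\<in>Cstar_pow (CARD('n) - 1). \<forall>y\<in>Cstar_pow (CARD('n) - 1).
                \<phi> (pmult x y) = schur (\<phi> x) (\<phi> y))
          \<and> (\<forall>x\<in>Cstar_pow (CARD('n) - 1). \<forall>k<CARD('n) - 1. \<forall>i j.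
                (\<lambda>z. \<phi> (x(k := z)) $ i $ j) holomorphic_on {z. z \<noteq> 0}))
    \<and> compact (Lpos :: (complex^'n^'n) set)
    \<and> (\<exists>\<phi> \<psi>. homeomorphism (torus_pow (CARD('n) - 1)) (Lpos :: (complex^'n^'n) set) \<phi> \<psi>
          \<and> (\<forall>x\<in>torus_pow (CARD('n) - 1). \<forall>y\<in>torus_pow (CARD('n) - 1).
                \<phi> (pmult x y) = schur (\<phi> x) (\<phi> y)))"
proof -
  obtain f :: "nat \<Rightarrow> 'n" where f: "bij_betw f {..<CARD('n)} UNIV"
    using ex_bij_betw_nat_finite[of "UNIV :: 'n set"] by (auto simp: atLeast0LessThan)
  show ?thesis
    using group_schur_group subgroup_Lpos compact_Lpos
      homeomorphism_Cstar_pow_Lset[OF f] homeomorphism_torus_pow_Lpos[OF f]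
      matrix_of_coords_pmult holomorphic_on_matrix_of_coords_update
    by blast
qed

end
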